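(* Let $G=(V,E)$ be a directed graph, $s\neq t$ vertices, $k\ge 1$ an integer and $e(u,v)\in E$. If $e(u,v)$ is an edge of $SPG_k(s,t)$, then there exist integers $k_f,k_b\ge 0$ such that $EV^*_{k_f}(s,u)$ and $EV^*_{k_b}(v,t)$ both exist, (1) $k_f+1+k_b\le k$, and (2) $EV^*_{k_f}(s,u)\cap EV^*_{k_b}(v,t)=\emptyset$. The converse does not hold in general: there exist $G,s,t,k$ and an edge $e(u,v)$ admitting such $k_f,k_b$ with $e(u,v)\notin SPG_k(s,t)$.
   Context: A path from $x$ to $y$ in $G$ is a vertex sequence $x=v_0,\dots,v_l=y$ with $(v_{i-1},v_i)\in E$; its length is $l$ and $V(p)$, $E(p)$ are its vertex and edge sets. A simple path has no repeated vertex. $SPG_k(s,t)$ is the subgraph of $G$ formed by the union of vertex sets and edge sets of all simple paths from $s$ to $t$ of length at most $k$. For a vertex $u$ and integer $l\ge 0$, $EV^*_l(s,u)$ exists iff there is at least one simple path from $s$ to $u$ of length at most $l$ not containing $t$, and then $EV^*_l(s,u)$ is the intersection of $V(p)$ over all such paths. Symmetrically, $EV^*_l(v,t)$ exists iff there is at least one simple path from $v$ to $t$ of length at most $l$ not containing $s$, and then it is the intersection of $V(p)$ over all such paths. *)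

theory Defs
  imports Main
begin

definition is_path :: "('a \<times> 'a) set \<Rightarrow> 'a list \<Rightarrow> 'a \<Rightarrow> 'a \<Rightarrow> bool" where
  "is_path E p x y \<longleftrightarrow> p \<noteq> [] \<and> hd p = x \<and> last p = y \<and>
     (\<forall>i. Suc i < length p \<longrightarrow> (p ! i, p ! Suc i) \<in> E)"

definition path_len :: "'a list \<Rightarrow> nat" where
  "path_len p = length p - 1"

definition path_edges :: "'a list \<Rightarrow> ('a \<times> 'a) set" where
  "path_edges p = set (zip p (tl p))"

definition simple_path :: "('a \<times> 'a) set \<Rightarrow> 'a list \<Rightarrow> 'a \<Rightarrow> 'a \<Rightarrow> bool" where
  "simple_path E p x y \<longleftrightarrow> is_path E p x y \<and> distinct p"

definition st_paths :: "('a \<times> 'a) set \<Rightarrow> 'a \<Rightarrow> 'a \<Rightarrow> nat \<Rightarrow> 'a list set" where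
  "st_paths E s t k = {p. simple_path E p s t \<and> path_len p \<le> k}"

definition SPG_vertices :: "('a \<times> 'a) set \<Rightarrow> 'a \<Rightarrow> 'a \<Rightarrow> nat \<Rightarrow> 'a set" where
  "SPG_vertices E s t k = (\<Union>p\<in>st_paths E s t k. set p)"

definition SPG_edges :: "('a \<times> 'a) set \<Rightarrow> 'a \<Rightarrow> 'a \<Rightarrow> nat \<Rightarrow> ('a \<times> 'a) set" where
  "SPG_edges E s t k = (\<Union>p\<in>st_paths E s t k. path_edges p)"

definition fwd_paths :: "('a \<times> 'a) set \<Rightarrow> 'a \<Rightarrow> 'a \<Rightarrow> nat \<Rightarrow> 'a \<Rightarrow> 'a list set" where
  "fwd_paths E s t l u = {p. simple_path E p s u \<and> path_len p \<le> l \<and> t \<notin> set p}"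

definition EVf_exists :: "('a \<times> 'a) set \<Rightarrow> 'a \<Rightarrow> 'a \<Rightarrow> nat \<Rightarrow> 'a \<Rightarrow> bool" where
  "EVf_exists E s t l u \<longleftrightarrow> fwd_paths E s t l u \<noteq> {}"

definition EVf :: "('a \<times> 'a) set \<Rightarrow> 'a \<Rightarrow> 'a \<Rightarrow> nat \<Rightarrow> 'a \<Rightarrow> 'a set" where
  "EVf E s t l u = (\<Inter>p\<in>fwd_paths E s t l u. set p)"

definition bwd_paths :: "('a \<times> 'a) set \<Rightarrow> 'a \<Rightarrow> 'a \<Rightarrow> nat \<Rightarrow> 'a \<Rightarrow> 'a list set" where
  "bwd_paths E s t l v = {p. simple_path E p v t \<and> path_len p \<le> l \<and> s \<notin> set p}"

definition EVb_exists :: "('a \<times> 'a) set \<Rightarrow> 'a \<Rightarrow> 'a \<Rightarrow> nat \<Rightarrow> 'a \<Rightarrow> bool" where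
  "EVb_exists E s t l v \<longleftrightarrow> bwd_paths E s t l v \<noteq> {}"

definition EVb :: "('a \<times> 'a) set \<Rightarrow> 'a \<Rightarrow> 'a \<Rightarrow> nat \<Rightarrow> 'a \<Rightarrow> 'a set" where
  "EVb E s t l v = (\<Inter>p\<in>bwd_paths E s t l v. set p)"

definition edge_cond :: "('a \<times> 'a) set \<Rightarrow> 'a \<Rightarrow> 'a \<Rightarrow> nat \<Rightarrow> 'a \<Rightarrow> 'a \<Rightarrow> bool" where
  "edge_cond E s t k u v \<longleftrightarrow> (\<exists>kf kb. EVf_exists E s t kf u \<and> EVb_exists E s t kb v \<and>
      kf + 1 + kb \<le> k \<and> EVf E s t kf u \<inter> EVb E s t kb v = {})"

end

theory Submission
  imports Defs
begin

text \<open>Splitting a simple s-t path of length at most k at the edge (u, v) yields a simple s-u path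
  avoiding t and a simple v-t path avoiding s, with lengths adding up to at most k - 1. Their
  vertex sets are disjoint and contain the respective sets EV*, so these lengths serve as
  k_f and k_b. The converse fails because EV* is an intersection over many paths: the two paths
  0-4-1 and 0-5-1 give EV*_2(0, 1) = {0, 1}, disjoint from the path 2-4-5-3, yet every simple
  0-3 path through the edge (1, 2) must reach 1 via 4 or 5 and leave 2 via 4 and then 5.\<close>

lemma path_edges_Nil [simp]: "path_edges [] = {}"
  and path_edges_singleton [simp]: "path_edges [x] = {}"
  and path_edges_Cons_Cons [simp]: "path_edges (x # y # p) = insert (x, y) (path_edges (y # p))"
  by (simp_all add: path_edges_def)

lemma path_edges_append:
  assumes "A \<noteq> []" and "B \<noteq> []"
  shows "path_edges (A @ B) = path_edges A \<union> insert (last A, hd B) (path_edges B)"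
  using assms(1)
proof (induction A rule: induct_list012)
  case (2 x)
  then show ?case using assms(2) by (cases B) auto
qed auto

lemma in_path_edges_iff: "(a, b) \<in> path_edges p \<longleftrightarrow> (\<exists>xs ys. p = xs @ a # b # ys)"
proof
  show "(a, b) \<in> path_edges p \<Longrightarrow> \<exists>xs ys. p = xs @ a # b # ys"
  proof (induction p rule: induct_list012)
    case (3 x y p)
    show ?case
    proof (cases "(x, y) = (a, b)")
      case True
      then show ?thesis by auto
    next
      case False
      with "3.prems" obtain xs ys where "y # p = xs @ a # b # ys" using "3.IH"(2) by auto
      then have "x # y # p = (x # xs) @ a # b # ys" by simp
      then show ?thesis by blast
    qed
  qed auto
next
  assume "\<exists>xs ys. p = xs @ a # b # ys"
  then obtain xs ys where "p = (xs @ [a]) @ b # ys" by auto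
  then show "(a, b) \<in> path_edges p" by (simp add: path_edges_append del: append_assoc)
qed

lemma in_path_edges_append_Cons_Cons: "(a, b) \<in> path_edges (xs @ a # b # ys)"
  by (auto simp: in_path_edges_iff)

lemma is_path_iff_path_edges:
  "is_path E p x y \<longleftrightarrow> p \<noteq> [] \<and> hd p = x \<and> last p = y \<and> path_edges p \<subseteq> E"
proof -
  have "zip p (tl p) = map (\<lambda>i. (p ! i, p ! Suc i)) [0..<length p - 1]"
    by (simp add: list_eq_iff_nth_eq nth_tl)
  then have "path_edges p = (\<lambda>i. (p ! i, p ! Suc i)) ` {i. Suc i < length p}"
    by (auto simp: path_edges_def)
  then show ?thesis by (auto simp: is_path_def)
qed

lemma is_path_append_iff:
  assumes "A \<noteq> []" and "B \<noteq> []"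
  shows "is_path E (A @ B) x y \<longleftrightarrow>
    is_path E A x (last A) \<and> (last A, hd B) \<in> E \<and> is_path E B (hd B) y"
  using assms by (auto simp: is_path_iff_path_edges path_edges_append)

lemma EVf_subset_set: "p \<in> fwd_paths E s t l u \<Longrightarrow> EVf E s t l u \<subseteq> set p"
  by (auto simp: EVf_def)

lemma EVb_subset_set: "p \<in> bwd_paths E s t l v \<Longrightarrow> EVb E s t l v \<subseteq> set p"
  by (auto simp: EVb_def)

lemma edge_cond_if_edge_of_simple_path:
  assumes p: "simple_path E p s t" and len: "path_len p \<le> k" and uv: "(u, v) \<in> path_edges p"
  shows "edge_cond E s t k u v"
proof -
  obtain xs ys where "p = (xs @ [u]) @ (v # ys)"
    using uv by (auto simp: in_path_edges_iff)
  moreover define A B where "A = xs @ [u]" and "B = v # ys"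
  ultimately have p_eq: "p = A @ B" by simp
  have ends: "A \<noteq> []" "B \<noteq> []" "last A = u" "hd B = v"
    by (simp_all add: A_def B_def)
  have "is_path E (A @ B) s t"
    using p by (simp add: p_eq simple_path_def)
  then have paths: "is_path E A s u" "is_path E B v t"
    unfolding is_path_append_iff[OF ends(1,2)] ends(3,4) by simp_all
  have distinct: "distinct A" "distinct B" and disjoint: "set A \<inter> set B = {}"
    using p by (simp_all add: p_eq simple_path_def)
  have "t \<in> set B" "s \<in> set A"
    using paths by (auto simp: is_path_iff_path_edges)
  with disjoint have "t \<notin> set A" "s \<notin> set B" by auto
  with paths distinct have
    A: "A \<in> fwd_paths E s t (path_len A) u" and B: "B \<in> bwd_paths E s t (path_len B) v"
    by (simp_all add: fwd_paths_def bwd_paths_def simple_path_def)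
  have "path_len A + 1 + path_len B \<le> k"
    using len by (simp add: p_eq A_def B_def path_len_def)
  moreover have "EVf E s t (path_len A) u \<inter> EVb E s t (path_len B) v = {}"
    using EVf_subset_set[OF A] EVb_subset_set[OF B] disjoint by blast
  ultimately show ?thesis
    using A B by (auto simp: edge_cond_def EVf_exists_def EVb_exists_def)
qed

lemma edge_cond_if_SPG_edge: "(u, v) \<in> SPG_edges E s t k \<Longrightarrow> edge_cond E s t k u v"
  by (auto simp: SPG_edges_def st_paths_def intro: edge_cond_if_edge_of_simple_path)

definition counterexample_edges :: "(nat \<times> nat) set" where
  "counterexample_edges = {(0, 4), (4, 1), (0, 5), (5, 1), (1, 2), (2, 4), (4, 5), (5, 3)}"

lemma counterexample_edge_cond: "edge_cond counterexample_edges 0 3 6 1 2"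
proof -
  have fwd: "[0, 4, 1] \<in> fwd_paths counterexample_edges 0 3 2 1"
    "[0, 5, 1] \<in> fwd_paths counterexample_edges 0 3 2 1"
    and bwd: "[2, 4, 5, 3] \<in> bwd_paths counterexample_edges 0 3 3 2"
    by (simp_all add: fwd_paths_def bwd_paths_def simple_path_def is_path_iff_path_edges
        path_len_def counterexample_edges_def)
  have "set [0, 4, 1] \<inter> set [0, 5, 1] \<inter> set [2, 4, 5, 3 :: nat] = {}" by simp
  then have "EVf counterexample_edges 0 3 2 1 \<inter> EVb counterexample_edges 0 3 3 2 = {}"
    using EVf_subset_set[OF fwd(1)] EVf_subset_set[OF fwd(2)] EVb_subset_set[OF bwd] by blast
  with fwd bwd show ?thesis
    unfolding edge_cond_def EVf_exists_def EVb_exists_def by (intro exI[of _ 2] exI[of _ 3]) auto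
qed

lemma counterexample_not_SPG_edge: "(1, 2) \<notin> SPG_edges counterexample_edges 0 3 k"
proof
  assume "(1, 2) \<in> SPG_edges counterexample_edges 0 3 k"
  then obtain p where p: "simple_path counterexample_edges p 0 3" "(1, 2) \<in> path_edges p"
    by (auto simp: SPG_edges_def st_paths_def)
  then obtain xs ys where p_eq: "p = xs @ 1 # 2 # ys"
    by (auto simp: in_path_edges_iff)
  have edges: "path_edges p \<subseteq> counterexample_edges" and ends: "hd p = 0" "last p = 3"
    and "distinct p"
    using p(1) by (simp_all add: simple_path_def is_path_iff_path_edges)
  obtain xs' w where xs: "xs = xs' @ [w]"
    using ends(1) by (cases xs rule: rev_exhaust) (auto simp: p_eq)
  have "(w, 1) \<in> path_edges p"
    using in_path_edges_append_Cons_Cons[of w 1 xs' "2 # ys"] by (simp add: p_eq xs)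
  with edges have w: "w \<in> {4, 5}" by (auto simp: counterexample_edges_def)
  obtain y ys' where ys: "ys = y # ys'"
    using ends(2) by (cases ys) (auto simp: p_eq)
  have "(2, y) \<in> path_edges p"
    using in_path_edges_append_Cons_Cons[of 2 y "xs @ [1]" ys'] by (simp add: p_eq ys)
  with edges have y: "y = 4" by (auto simp: counterexample_edges_def)
  obtain y' ys'' where ys': "ys' = y' # ys''"
    using ends(2) y by (cases ys') (auto simp: p_eq ys)
  have "(4, y') \<in> path_edges p"
    using in_path_edges_append_Cons_Cons[of 4 y' "xs @ [1, 2]" ys''] by (simp add: p_eq ys ys' y)
  with edges \<open>distinct p\<close> have "y' = 5" by (auto simp: counterexample_edges_def p_eq ys ys' y)
  with w y \<open>distinct p\<close> show False by (auto simp: p_eq xs ys ys')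
qed

theorem lemma3p3:
  shows "(\<forall>(V :: 'a set) E s t k u v.
            E \<subseteq> V \<times> V \<longrightarrow> s \<in> V \<longrightarrow> t \<in> V \<longrightarrow> s \<noteq> t \<longrightarrow> 1 \<le> k \<longrightarrow>
            (u, v) \<in> E \<longrightarrow> (u, v) \<in> SPG_edges E s t k \<longrightarrow> edge_cond E s t k u v)
       \<and> (\<exists>(V :: nat set) E s t k u v.
            finite V \<and> E \<subseteq> V \<times> V \<and> s \<in> V \<and> t \<in> V \<and> s \<noteq> t \<and> 1 \<le> k \<and>
            (u, v) \<in> E \<and> edge_cond E s t k u v \<and> (u, v) \<notin> SPG_edges E s t k)"
proof (intro conjI)
  show "\<exists>(V :: nat set) E s t k u v.
            finite V \<and> E \<subseteq> V \<times> V \<and> s \<in> V \<and> t \<in> V \<and> s \<noteq> t \<and> 1 \<le> k \<and>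
            (u, v) \<in> E \<and> edge_cond E s t k u v \<and> (u, v) \<notin> SPG_edges E s t k"
    using counterexample_edge_cond counterexample_not_SPG_edge
    by (intro exI[of _ "{0..5}"] exI[of _ counterexample_edges] exI[of _ 0] exI[of _ 3]
        exI[of _ 6] exI[of _ 1] exI[of _ 2]) (auto simp: counterexample_edges_def)
qed (blast intro: edge_cond_if_SPG_edge)

end
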